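(* Let $G=(V,E)$ be a finite simple undirected graph, $\Gamma$ a subgroup of $\mathrm{Aut}(G)$, and $(G,\mathcal{C})$ the colored graph whose coloring is given by the $\Gamma$-orbits. (i) $(G,\mathcal{C})$ is $2$-path regular (satisfies (M1)) with respect to any ordering of the vertex color classes. (ii) Let $(v_{\sigma_1},\dots,v_{\sigma_p})$ be a perfect elimination ordering of $G$. Set $\eta_1=c(v_{\sigma_1})$; given $\eta_1,\dots,\eta_{k-1}$ for $2\le k\le r$, let $v_k$ be the first vertex in the peo lying in $V\setminus\bigcup_{i=1}^{k-1}V_{\eta_i}$ and set $\eta_k=c(v_k)$. Then $(V_{\eta_1},\dots,V_{\eta_r})$ is a color perfect elimination ordering. (iii) If $G$ is decomposable, then $(G,\mathcal{C})$ is CER with respect to any cpeo. (iv) If $G$ is decomposable and $\Gamma$ is generously transitive or cyclic, then $(G,\mathcal{C})$ is symmetric CER with respect to any cpeo.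
   Context: $\mathrm{Aut}(G)$: permutations $\sigma$ of $V$ with $\sigma(v)\sim\sigma(w)\iff v\sim w$. $\tilde E=E\cup\{\{v\}:v\in V\}$; $\Gamma$ acts by $\sigma\cdot\{v,w\}=\{\sigma(v),\sigma(w)\}$. Orbit coloring: vertex color classes $V_1,\dots,V_r$ are the $\Gamma$-orbits on $V$, edge color classes are the $\Gamma$-orbits on $E$; $c(v,w)$ is the color of $\{v,w\}\in\tilde E$, loops colored by the index of the vertex orbit, $c(v)=c(v,v)$. A vertex is simplicial if its neighbours form a clique; a perfect elimination ordering (peo) $(v_{\sigma_1},\dots,v_{\sigma_p})$ has each $v_{\sigma_k}$ simplicial in $G[\{v_{\sigma_k},\dots,v_{\sigma_p}\}]$. $G$ is decomposable if every induced cycle has length $3$ (equivalently, $G$ has a peo). For an ordering $(V_{\eta_1},\dots,V_{\eta_r})$: it is a color perfect elimination ordering (cpeo) if every $v\in V_{\eta_i}$ is simplicial in $G[V_{\eta_i}\cup\dots\cup V_{\eta_r}]$; $\pi(v)=i$ iff $v\in V_{\eta_i}$, $V_{\le i}=V_{\eta_1}\cup\dots\cup V_{\eta_i}$; for $\{v,w\}\in\tilde E$, $m_{v\to w}(k,h)=|\{u\in V_{\le\min(\pi(v),\pi(w))}: c(v,u)=k, c(u,w)=h\}|$, $m_{v\leftrightarrow w}(k,h)=m_{v\to w}(k,h)+m_{v\to w}(h,k)$; $F_i=\{c(v,w):\{v,w\}\in\tilde E, c(v)=c(w)=i\}$, $F=\bigcup_iF_i$. (M1): $c(v,w)=c(v',w')$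 implies $m_{v\leftrightarrow w}=m_{v'\leftrightarrow w'}$. (M2): $c(v)=c(w)$ implies $m_{v\to w}(k,h)=m_{w\to v}(k,h)$ for all $k,h\in F$. CER with respect to an ordering: cpeo and (M1); symmetric CER: additionally (M2). $\Gamma$ is generously transitive if for every orbit $V_i$ and distinct $a,b\in V_i$ there is $\sigma\in\Gamma$ swapping $a$ and $b$. *)

theory Defs
  imports "HOL-Combinatorics.Permutations"
begin

definition simple_graph :: "'a set \<Rightarrow> ('a \<Rightarrow> 'a \<Rightarrow> bool) \<Rightarrow> bool" where
  "simple_graph V adj \<longleftrightarrow> finite V \<and> (\<forall>v w. adj v w \<longrightarrow> v \<in> V \<and> w \<in> V)
     \<and> (\<forall>v w. adj v w \<longrightarrow> adj w v) \<and> (\<forall>v. \<not> adj v v)"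

definition Aut :: "'a set \<Rightarrow> ('a \<Rightarrow> 'a \<Rightarrow> bool) \<Rightarrow> ('a \<Rightarrow> 'a) set" where
  "Aut V adj = {\<sigma>. \<sigma> permutes V \<and> (\<forall>v\<in>V. \<forall>w\<in>V. adj (\<sigma> v) (\<sigma> w) \<longleftrightarrow> adj v w)}"

definition subgroup_Aut :: "('a \<Rightarrow> 'a) set \<Rightarrow> 'a set \<Rightarrow> ('a \<Rightarrow> 'a \<Rightarrow> bool) \<Rightarrow> bool" where
  "subgroup_Aut \<Gamma> V adj \<longleftrightarrow> \<Gamma> \<subseteq> Aut V adj \<and> id \<in> \<Gamma>
     \<and> (\<forall>\<sigma>\<in>\<Gamma>. \<forall>\<tau>\<in>\<Gamma>. \<sigma> \<circ> \<tau> \<in> \<Gamma>) \<and> (\<forall>\<sigma>\<in>\<Gamma>. inv \<sigma> \<in> \<Gamma>)"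

definition vorbit :: "('a \<Rightarrow> 'a) set \<Rightarrow> 'a \<Rightarrow> 'a set" where
  "vorbit \<Gamma> v = (\<lambda>\<sigma>. \<sigma> v) ` \<Gamma>"

definition vorbits :: "('a \<Rightarrow> 'a) set \<Rightarrow> 'a set \<Rightarrow> 'a set set" where
  "vorbits \<Gamma> V = vorbit \<Gamma> ` V"

definition Etil :: "'a set \<Rightarrow> ('a \<Rightarrow> 'a \<Rightarrow> bool) \<Rightarrow> 'a \<Rightarrow> 'a \<Rightarrow> bool" where
  "Etil V adj v w \<longleftrightarrow> (v = w \<and> v \<in> V) \<or> adj v w"

text \<open>Orbit coloring: the color c(v,w) of {v,w} is its Gamma-orbit (colors are orbits);
  c(v) = c(v,v) is the orbit of the loop {v}, which corresponds to the orbit of v.\<close>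
definition ecol :: "('a \<Rightarrow> 'a) set \<Rightarrow> 'a \<Rightarrow> 'a \<Rightarrow> 'a set set" where
  "ecol \<Gamma> v w = (\<lambda>\<sigma>. {\<sigma> v, \<sigma> w}) ` \<Gamma>"

definition vcol :: "('a \<Rightarrow> 'a) set \<Rightarrow> 'a \<Rightarrow> 'a set set" where
  "vcol \<Gamma> v = ecol \<Gamma> v v"

text \<open>An ordering of the vertex color classes (0-indexed list).\<close>
definition color_order :: "('a \<Rightarrow> 'a) set \<Rightarrow> 'a set \<Rightarrow> 'a set list \<Rightarrow> bool" where
  "color_order \<Gamma> V ord \<longleftrightarrow> distinct ord \<and> set ord = vorbits \<Gamma> V"

definition pos :: "'a set list \<Rightarrow> 'a \<Rightarrow> nat" where
  "pos ord v = (THE i. i < length ord \<and> v \<in> ord ! i)"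

definition Vle :: "'a set list \<Rightarrow> nat \<Rightarrow> 'a set" where
  "Vle ord i = \<Union> (set (take (Suc i) ord))"

definition mto :: "'a set \<Rightarrow> ('a \<Rightarrow> 'a \<Rightarrow> bool) \<Rightarrow> ('a \<Rightarrow> 'a) set \<Rightarrow> 'a set list
    \<Rightarrow> 'a \<Rightarrow> 'a \<Rightarrow> 'a set set \<Rightarrow> 'a set set \<Rightarrow> nat" where
  "mto V adj \<Gamma> ord v w k h = card {u \<in> Vle ord (min (pos ord v) (pos ord w)).
      Etil V adj v u \<and> Etil V adj u w \<and> ecol \<Gamma> v u = k \<and> ecol \<Gamma> u w = h}"

definition mboth :: "'a set \<Rightarrow> ('a \<Rightarrow> 'a \<Rightarrow> bool) \<Rightarrow> ('a \<Rightarrow> 'a) set \<Rightarrow> 'a set list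
    \<Rightarrow> 'a \<Rightarrow> 'a \<Rightarrow> 'a set set \<Rightarrow> 'a set set \<Rightarrow> nat" where
  "mboth V adj \<Gamma> ord v w k h = mto V adj \<Gamma> ord v w k h + mto V adj \<Gamma> ord v w h k"

definition M1 :: "'a set \<Rightarrow> ('a \<Rightarrow> 'a \<Rightarrow> bool) \<Rightarrow> ('a \<Rightarrow> 'a) set \<Rightarrow> 'a set list \<Rightarrow> bool" where
  "M1 V adj \<Gamma> ord \<longleftrightarrow> (\<forall>v w v' w'. Etil V adj v w \<longrightarrow> Etil V adj v' w'
     \<longrightarrow> ecol \<Gamma> v w = ecol \<Gamma> v' w'
     \<longrightarrow> (\<forall>k h. mboth V adj \<Gamma> ord v w k h = mboth V adj \<Gamma> ord v' w' k h))"

definition Fcols :: "'a set \<Rightarrow> ('a \<Rightarrow> 'a \<Rightarrow> bool) \<Rightarrow> ('a \<Rightarrow> 'a) set \<Rightarrow> 'a set set set" where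
  "Fcols V adj \<Gamma> = {ecol \<Gamma> v w | v w. Etil V adj v w \<and> vcol \<Gamma> v = vcol \<Gamma> w}"

definition M2 :: "'a set \<Rightarrow> ('a \<Rightarrow> 'a \<Rightarrow> bool) \<Rightarrow> ('a \<Rightarrow> 'a) set \<Rightarrow> 'a set list \<Rightarrow> bool" where
  "M2 V adj \<Gamma> ord \<longleftrightarrow> (\<forall>v w. Etil V adj v w \<longrightarrow> vcol \<Gamma> v = vcol \<Gamma> w
     \<longrightarrow> (\<forall>k\<in>Fcols V adj \<Gamma>. \<forall>h\<in>Fcols V adj \<Gamma>.
            mto V adj \<Gamma> ord v w k h = mto V adj \<Gamma> ord w v k h))"

definition simplicial :: "('a \<Rightarrow> 'a \<Rightarrow> bool) \<Rightarrow> 'a set \<Rightarrow> 'a \<Rightarrow> bool" where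
  "simplicial adj S v \<longleftrightarrow> (\<forall>a\<in>S. \<forall>b\<in>S. adj v a \<longrightarrow> adj v b \<longrightarrow> a \<noteq> b \<longrightarrow> adj a b)"

definition peo :: "'a set \<Rightarrow> ('a \<Rightarrow> 'a \<Rightarrow> bool) \<Rightarrow> 'a list \<Rightarrow> bool" where
  "peo V adj vs \<longleftrightarrow> distinct vs \<and> set vs = V
     \<and> (\<forall>k<length vs. simplicial adj (set (drop k vs)) (vs ! k))"

definition cpeo :: "('a \<Rightarrow> 'a \<Rightarrow> bool) \<Rightarrow> 'a set list \<Rightarrow> bool" where
  "cpeo adj ord \<longleftrightarrow> (\<forall>i<length ord. \<forall>v\<in>ord ! i. simplicial adj (\<Union> (set (drop i ord))) v)"

definition CER :: "'a set \<Rightarrow> ('a \<Rightarrow> 'a \<Rightarrow> bool) \<Rightarrow> ('a \<Rightarrow> 'a) set \<Rightarrow> 'a set list \<Rightarrow> bool" where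
  "CER V adj \<Gamma> ord \<longleftrightarrow> cpeo adj ord \<and> M1 V adj \<Gamma> ord"

definition symCER :: "'a set \<Rightarrow> ('a \<Rightarrow> 'a \<Rightarrow> bool) \<Rightarrow> ('a \<Rightarrow> 'a) set \<Rightarrow> 'a set list \<Rightarrow> bool" where
  "symCER V adj \<Gamma> ord \<longleftrightarrow> CER V adj \<Gamma> ord \<and> M2 V adj \<Gamma> ord"

definition induced_cycle :: "'a set \<Rightarrow> ('a \<Rightarrow> 'a \<Rightarrow> bool) \<Rightarrow> 'a list \<Rightarrow> bool" where
  "induced_cycle V adj cs \<longleftrightarrow> length cs \<ge> 3 \<and> distinct cs \<and> set cs \<subseteq> V \<and>
     (\<forall>i<length cs. \<forall>j<length cs. adj (cs ! i) (cs ! j) \<longleftrightarrow>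
        (j = Suc i mod length cs \<or> i = Suc j mod length cs))"

definition decomposable :: "'a set \<Rightarrow> ('a \<Rightarrow> 'a \<Rightarrow> bool) \<Rightarrow> bool" where
  "decomposable V adj \<longleftrightarrow> (\<forall>cs. induced_cycle V adj cs \<longrightarrow> length cs = 3)"

definition generously_transitive :: "('a \<Rightarrow> 'a) set \<Rightarrow> 'a set \<Rightarrow> bool" where
  "generously_transitive \<Gamma> V \<longleftrightarrow> (\<forall>Orb\<in>vorbits \<Gamma> V. \<forall>a\<in>Orb. \<forall>b\<in>Orb. a \<noteq> b \<longrightarrow>
      (\<exists>\<sigma>\<in>\<Gamma>. \<sigma> a = b \<and> \<sigma> b = a))"

definition cyclic_grp :: "('a \<Rightarrow> 'a) set \<Rightarrow> bool" where
  "cyclic_grp \<Gamma> \<longleftrightarrow> (\<exists>g\<in>\<Gamma>. \<Gamma> = {g ^^ n | n. True})"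

fun peo_color_order :: "('a \<Rightarrow> 'a set) \<Rightarrow> 'a list \<Rightarrow> nat \<Rightarrow> 'a set list" where
  "peo_color_order orb vs 0 = []"
| "peo_color_order orb vs (Suc k) =
     (let prev = peo_color_order orb vs k
      in prev @ [orb (hd (filter (\<lambda>x. x \<notin> \<Union> (set prev)) vs))])"

end

theory Submission
  imports Defs
begin

(* \<Gamma> permutes every color class, so each count m_{v->w}(k,h) is invariant under \<Gamma>; two edges
  of the same color are mapped onto each other by \<Gamma>, possibly with the endpoints exchanged, which
  gives (M1) for every ordering of the classes.
  For (ii), the i-th class is the orbit of the first peo vertex x outside the earlier classes, so
  the union of the remaining classes lies in the peo suffix starting at x. Hence x is simplicial in
  that union, and so is its whole orbit, the union being \<Gamma>-invariant.
  For (M2), a generously transitive group swaps v and w. An abelian group need not, but there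
  \<sigma> v \<mapsto> inv \<sigma> w is well defined on the orbit of v and maps the middle vertices of the colored
  walks v-u-w bijectively onto those of the walks w-u-v; the condition k \<in> F keeps the middle
  vertices inside that orbit. *)

lemma ecol_commute: "ecol \<Gamma> x y = ecol \<Gamma> y x"
  unfolding ecol_def by (simp add: insert_commute)

definition invariant_under :: "('a \<Rightarrow> 'a) set \<Rightarrow> 'a set \<Rightarrow> bool" where
  "invariant_under \<Gamma> A \<longleftrightarrow> (\<forall>\<sigma>\<in>\<Gamma>. \<forall>x. \<sigma> x \<in> A \<longleftrightarrow> x \<in> A)"

lemma invariant_under_Union:
  "(\<And>A. A \<in> \<A> \<Longrightarrow> invariant_under \<Gamma> A) \<Longrightarrow> invariant_under \<Gamma> (\<Union>\<A>)"
  unfolding invariant_under_def by blast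

lemma invariant_under_Vle:
  "\<forall>A\<in>set ord. invariant_under \<Gamma> A \<Longrightarrow> invariant_under \<Gamma> (Vle ord i)"
  unfolding Vle_def by (auto intro: invariant_under_Union dest: in_set_takeD)

lemma pos_apply:
  assumes "\<forall>A\<in>set ord. invariant_under \<Gamma> A" and "\<sigma> \<in> \<Gamma>"
  shows "pos ord (\<sigma> v) = pos ord v"
proof -
  have "\<sigma> v \<in> ord ! i \<longleftrightarrow> v \<in> ord ! i" if "i < length ord" for i
    using assms that unfolding invariant_under_def by auto
  then have "(\<lambda>i. i < length ord \<and> \<sigma> v \<in> ord ! i) = (\<lambda>i. i < length ord \<and> v \<in> ord ! i)"
    by blast
  then show ?thesis
    unfolding pos_def by simp
qed

lemma simplicial_subset: "simplicial adj S x \<Longrightarrow> T \<subseteq> S \<Longrightarrow> simplicial adj T x"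
  unfolding simplicial_def by blast

lemma peo_simplicial_append_Cons:
  assumes "peo V adj (us @ x # ws)"
  shows "simplicial adj (set (x # ws)) x"
proof -
  have "\<forall>k<length (us @ x # ws). simplicial adj (set (drop k (us @ x # ws))) ((us @ x # ws) ! k)"
    using assms unfolding peo_def by blast
  from this[rule_format, of "length us"] show ?thesis
    by simp
qed

lemma length_peo_color_order: "length (peo_color_order orb vs k) = k"
  by (induction k) (simp_all add: Let_def)

lemma take_peo_color_order: "i \<le> k \<Longrightarrow> take i (peo_color_order orb vs k) = peo_color_order orb vs i"
proof (induction k)
  case (Suc k)
  show ?case
  proof (cases "i \<le> k")
    case True
    then show ?thesis
      using Suc by (simp add: Let_def length_peo_color_order)
  next
    case False
    then have "i = Suc k"
      using Suc.prems by simp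
    then show ?thesis
      by (metis take_all length_peo_color_order order.refl)
  qed
qed simp

lemma nth_peo_color_order:
  assumes "i < k"
  shows "peo_color_order orb vs k ! i =
    orb (hd (filter (\<lambda>x. x \<notin> \<Union> (set (peo_color_order orb vs i))) vs))"
proof -
  have "take (Suc i) (peo_color_order orb vs k) = peo_color_order orb vs (Suc i)"
    using assms by (simp add: take_peo_color_order)
  then have "peo_color_order orb vs k ! i = peo_color_order orb vs (Suc i) ! i"
    by (metis lessI nth_take)
  then show ?thesis
    by (simp add: Let_def nth_append length_peo_color_order)
qed

lemma uncovered_if_fewer_classes:
  assumes eq: "\<And>x y. y \<in> orb x \<Longrightarrow> orb y = orb x"
    and classes: "set cs \<subseteq> orb ` set vs" and short: "length cs < card (orb ` set vs)"
  shows "\<exists>x\<in>set vs. x \<notin> \<Union> (set cs)"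
proof (rule ccontr)
  assume covered: "\<not> ?thesis"
  have "orb y \<in> set cs" if "y \<in> set vs" for y
  proof -
    obtain c where "c \<in> set cs" "y \<in> c"
      using covered \<open>y \<in> set vs\<close> by blast
    moreover obtain x where "c = orb x"
      using classes \<open>c \<in> set cs\<close> by blast
    ultimately show ?thesis
      using eq by metis
  qed
  then have "orb ` set vs \<subseteq> set cs"
    by blast
  then have "card (orb ` set vs) \<le> length cs"
    using card_mono[OF List.finite_set] card_length order.trans by metis
  then show False
    using short by simp
qed

lemma peo_color_order_distinct_classes:
  assumes self: "\<And>x. x \<in> orb x" and eq: "\<And>x y. y \<in> orb x \<Longrightarrow> orb y = orb x"
    and "i \<le> card (orb ` set vs)"
  shows "distinct (peo_color_order orb vs i) \<and> set (peo_color_order orb vs i) \<subseteq> orb ` set vs"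
  using assms(3)
proof (induction i)
  case 0
  then show ?case by simp
next
  case (Suc i)
  let ?cs = "peo_color_order orb vs i"
  let ?x = "hd (filter (\<lambda>x. x \<notin> \<Union> (set ?cs)) vs)"
  have "\<exists>x\<in>set vs. x \<notin> \<Union> (set ?cs)"
    using Suc uncovered_if_fewer_classes[OF eq] by (simp add: length_peo_color_order)
  then have "?x \<in> set vs" "?x \<notin> \<Union> (set ?cs)"
    using hd_in_set[of "filter (\<lambda>x. x \<notin> \<Union> (set ?cs)) vs"] by (auto simp: filter_empty_conv)
  then show ?case
    using Suc self by (auto simp: Let_def)
qed

lemma peo_color_order_nth_first_uncovered:
  assumes self: "\<And>x. x \<in> orb x" and eq: "\<And>x y. y \<in> orb x \<Longrightarrow> orb y = orb x"
    and "i < card (orb ` set vs)"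
  obtains us x ws where "vs = us @ x # ws" and "set us \<subseteq> \<Union> (set (peo_color_order orb vs i))"
    and "peo_color_order orb vs (card (orb ` set vs)) ! i = orb x"
proof -
  let ?P = "\<Union> (set (peo_color_order orb vs i))"
  have "set (peo_color_order orb vs i) \<subseteq> orb ` set vs"
    using peo_color_order_distinct_classes[OF self eq] assms(3) by simp
  then have "\<exists>x\<in>set vs. x \<notin> ?P"
    using uncovered_if_fewer_classes[OF eq] assms(3) by (simp add: length_peo_color_order)
  then have "filter (\<lambda>x. x \<notin> ?P) vs \<noteq> []"
    unfolding filter_empty_conv by blast
  then obtain x rest where first: "filter (\<lambda>x. x \<notin> ?P) vs = x # rest"
    by (meson neq_Nil_conv)
  then have "peo_color_order orb vs (card (orb ` set vs)) ! i = orb x"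
    using nth_peo_color_order[OF assms(3), of orb vs] by simp
  moreover obtain us ws where "vs = us @ x # ws" "\<forall>u\<in>set us. u \<in> ?P"
    using first unfolding filter_eq_Cons_iff by auto
  ultimately show ?thesis
    using that by blast
qed

locale perm_group =
  fixes V :: "'a set" and \<Gamma> :: "('a \<Rightarrow> 'a) set"
  assumes permutes: "\<sigma> \<in> \<Gamma> \<Longrightarrow> \<sigma> permutes V"
    and id_in: "id \<in> \<Gamma>"
    and comp_in: "\<sigma> \<in> \<Gamma> \<Longrightarrow> \<tau> \<in> \<Gamma> \<Longrightarrow> \<sigma> \<circ> \<tau> \<in> \<Gamma>"
    and inv_in: "\<sigma> \<in> \<Gamma> \<Longrightarrow> inv \<sigma> \<in> \<Gamma>"
begin

lemma inv_apply [simp]: "\<sigma> \<in> \<Gamma> \<Longrightarrow> inv \<sigma> (\<sigma> x) = x"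
  using permutes permutes_inverses(2) by metis

lemma apply_inv [simp]: "\<sigma> \<in> \<Gamma> \<Longrightarrow> \<sigma> (inv \<sigma> x) = x"
  using permutes permutes_inverses(1) by metis

lemma apply_eq_iff: "\<sigma> \<in> \<Gamma> \<Longrightarrow> \<sigma> x = \<sigma> y \<longleftrightarrow> x = y"
  by (metis inv_apply)

lemma apply_in_V_iff: "\<sigma> \<in> \<Gamma> \<Longrightarrow> \<sigma> x \<in> V \<longleftrightarrow> x \<in> V"
  using permutes permutes_in_image by metis

lemma vorbit_self: "a \<in> vorbit \<Gamma> a"
  unfolding vorbit_def using id_in by (rule rev_image_eqI) simp

lemma apply_in_vorbit:
  assumes "\<sigma> \<in> \<Gamma>" and "y \<in> vorbit \<Gamma> a"
  shows "\<sigma> y \<in> vorbit \<Gamma> a"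
proof -
  obtain \<tau> where "\<tau> \<in> \<Gamma>" "y = \<tau> a"
    using assms(2) unfolding vorbit_def by blast
  then have "\<sigma> \<circ> \<tau> \<in> \<Gamma>" "\<sigma> y = (\<sigma> \<circ> \<tau>) a"
    using assms(1) comp_in by auto
  then show ?thesis
    unfolding vorbit_def by blast
qed

lemma vorbit_sym: "y \<in> vorbit \<Gamma> a \<Longrightarrow> a \<in> vorbit \<Gamma> y"
  unfolding vorbit_def by (auto intro!: rev_image_eqI[OF inv_in])

lemma vorbit_subset: "y \<in> vorbit \<Gamma> a \<Longrightarrow> vorbit \<Gamma> y \<subseteq> vorbit \<Gamma> a"
  using apply_in_vorbit unfolding vorbit_def by blast

lemma vorbit_eq: "y \<in> vorbit \<Gamma> a \<Longrightarrow> vorbit \<Gamma> y = vorbit \<Gamma> a"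
  using vorbit_subset vorbit_sym by blast

lemma vorbit_subset_V: "a \<in> V \<Longrightarrow> vorbit \<Gamma> a \<subseteq> V"
  unfolding vorbit_def using apply_in_V_iff by blast

lemma invariant_under_vorbit: "invariant_under \<Gamma> (vorbit \<Gamma> a)"
  unfolding invariant_under_def by (metis apply_in_vorbit inv_apply inv_in)

lemma color_order_invariant:
  "color_order \<Gamma> V ord \<Longrightarrow> \<forall>A\<in>set ord. invariant_under \<Gamma> A"
  unfolding color_order_def vorbits_def using invariant_under_vorbit by auto

lemma invariant_under_iff_vorbit:
  "invariant_under \<Gamma> A \<Longrightarrow> y \<in> vorbit \<Gamma> x \<Longrightarrow> y \<in> A \<longleftrightarrow> x \<in> A"
  unfolding invariant_under_def vorbit_def by blast

lemma Union_drop_vorbits_subset: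
  assumes "distinct ord" and "set ord \<subseteq> vorbits \<Gamma> V"
  shows "\<Union> (set (drop i ord)) \<subseteq> V - \<Union> (set (take i ord))"
proof
  have orbit: "\<exists>a\<in>V. A = vorbit \<Gamma> a" if "A \<in> set ord" for A
    using assms(2) that unfolding vorbits_def by blast
  fix y assume "y \<in> \<Union> (set (drop i ord))"
  then obtain A where A: "A \<in> set (drop i ord)" "y \<in> A"
    by blast
  then obtain a where "a \<in> V" "A = vorbit \<Gamma> a"
    using orbit in_set_dropD by metis
  then have "y \<in> V" and A_eq: "A = vorbit \<Gamma> y"
    using A(2) vorbit_subset_V vorbit_eq by auto
  have "y \<notin> B" if B: "B \<in> set (take i ord)" for B
  proof
    assume "y \<in> B"
    moreover obtain b where "B = vorbit \<Gamma> b"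
      using orbit in_set_takeD B by metis
    ultimately have "B = A"
      using A_eq vorbit_eq by simp
    then show False
      using set_take_disj_set_drop_if_distinct[OF assms(1), of i i] A(1) B by blast
  qed
  then show "y \<in> V - \<Union> (set (take i ord))"
    using \<open>y \<in> V\<close> by blast
qed

lemma ecol_apply:
  assumes \<sigma>: "\<sigma> \<in> \<Gamma>"
  shows "ecol \<Gamma> (\<sigma> x) (\<sigma> y) = ecol \<Gamma> x y"
proof -
  have "(\<lambda>\<tau>. \<tau> \<circ> \<sigma>) ` \<Gamma> = \<Gamma>"
  proof
    show "(\<lambda>\<tau>. \<tau> \<circ> \<sigma>) ` \<Gamma> \<subseteq> \<Gamma>"
      using comp_in \<sigma> by blast
    show "\<Gamma> \<subseteq> (\<lambda>\<tau>. \<tau> \<circ> \<sigma>) ` \<Gamma>"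
    proof
      fix \<tau> assume "\<tau> \<in> \<Gamma>"
      then have "\<tau> \<circ> inv \<sigma> \<in> \<Gamma>"
        using comp_in inv_in \<sigma> by blast
      moreover have "\<tau> = (\<tau> \<circ> inv \<sigma>) \<circ> \<sigma>"
        using \<sigma> by (simp add: fun_eq_iff)
      ultimately show "\<tau> \<in> (\<lambda>\<tau>. \<tau> \<circ> \<sigma>) ` \<Gamma>"
        by blast
    qed
  qed
  then have "ecol \<Gamma> x y = (\<lambda>\<tau>. {\<tau> x, \<tau> y}) ` ((\<lambda>\<tau>. \<tau> \<circ> \<sigma>) ` \<Gamma>)"
    unfolding ecol_def by simp
  then show ?thesis
    unfolding ecol_def by (simp add: image_image)
qed

lemma ecol_eq_imp_ex:
  assumes "ecol \<Gamma> x y = ecol \<Gamma> x' y'"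
  shows "\<exists>\<tau>\<in>\<Gamma>. (\<tau> x = x' \<and> \<tau> y = y') \<or> (\<tau> x = y' \<and> \<tau> y = x')"
proof -
  have "{x', y'} \<in> ecol \<Gamma> x' y'"
    unfolding ecol_def using id_in by (rule rev_image_eqI) simp
  then have "{x', y'} \<in> ecol \<Gamma> x y"
    using assms by simp
  then obtain \<tau> where "\<tau> \<in> \<Gamma>" "{x', y'} = {\<tau> x, \<tau> y}"
    unfolding ecol_def by blast
  then show ?thesis
    by (auto simp: doubleton_eq_iff)
qed

lemma vcol_eq_imp_vorbit:
  assumes "vcol \<Gamma> a = vcol \<Gamma> b"
  shows "b \<in> vorbit \<Gamma> a"
proof -
  obtain \<tau> where "\<tau> \<in> \<Gamma>" "\<tau> a = b"
    using ecol_eq_imp_ex[of a a b b] assms unfolding vcol_def by blast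
  then show ?thesis
    unfolding vorbit_def by blast
qed

lemma Fcols_imp_vorbit:
  assumes "ecol \<Gamma> v u \<in> Fcols V adj \<Gamma>"
  shows "u \<in> vorbit \<Gamma> v"
proof -
  obtain a b where ab: "ecol \<Gamma> a b = ecol \<Gamma> v u" "b \<in> vorbit \<Gamma> a"
    using assms vcol_eq_imp_vorbit unfolding Fcols_def by auto
  then obtain \<tau> where "\<tau> \<in> \<Gamma>" "(\<tau> a = v \<and> \<tau> b = u) \<or> (\<tau> a = u \<and> \<tau> b = v)"
    using ecol_eq_imp_ex by blast
  then have "u \<in> vorbit \<Gamma> a" "v \<in> vorbit \<Gamma> a"
    using ab(2) apply_in_vorbit vorbit_self by auto
  then show ?thesis
    using vorbit_eq by simp
qed

end

locale aut_group = perm_group V \<Gamma>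
  for V :: "'a set" and \<Gamma> :: "('a \<Rightarrow> 'a) set" +
  fixes adj :: "'a \<Rightarrow> 'a \<Rightarrow> bool"
  assumes simple_graph: "simple_graph V adj"
    and adj_apply: "\<sigma> \<in> \<Gamma> \<Longrightarrow> adj (\<sigma> x) (\<sigma> y) \<longleftrightarrow> adj x y"

lemma aut_groupI:
  assumes G: "simple_graph V adj" and sub: "subgroup_Aut \<Gamma> V adj"
  shows "aut_group V \<Gamma> adj"
proof -
  interpret perm_group V \<Gamma>
    using sub unfolding subgroup_Aut_def Aut_def by unfold_locales auto
  have "adj (\<sigma> x) (\<sigma> y) \<longleftrightarrow> adj x y" if "\<sigma> \<in> \<Gamma>" for \<sigma> x y
  proof (cases "x \<in> V \<and> y \<in> V")
    case True
    then show ?thesis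
      using that sub unfolding subgroup_Aut_def Aut_def by blast
  next
    case False
    then have "\<not> adj x y" "\<not> adj (\<sigma> x) (\<sigma> y)"
      using G apply_in_V_iff[OF that] unfolding simple_graph_def by auto
    then show ?thesis
      by simp
  qed
  then show ?thesis
    using G by (simp add: aut_group_def aut_group_axioms_def perm_group_axioms)
qed

context aut_group
begin

lemma adj_in_V: "adj x y \<Longrightarrow> x \<in> V \<and> y \<in> V"
  using simple_graph unfolding simple_graph_def by blast

lemma Etil_commute: "Etil V adj x y \<longleftrightarrow> Etil V adj y x"
  using simple_graph unfolding simple_graph_def Etil_def by blast

lemma Etil_in_V: "Etil V adj x y \<Longrightarrow> x \<in> V \<and> y \<in> V"
  unfolding Etil_def using adj_in_V by blast

lemma Etil_apply: "\<sigma> \<in> \<Gamma> \<Longrightarrow> Etil V adj (\<sigma> x) (\<sigma> y) \<longleftrightarrow> Etil V adj x y"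
  unfolding Etil_def by (simp add: adj_apply apply_eq_iff apply_in_V_iff)

lemma ecol_eq_imp_Etil:
  assumes "ecol \<Gamma> x y = ecol \<Gamma> x' y'" and "Etil V adj x y"
  shows "Etil V adj x' y'"
proof -
  obtain \<tau> where "\<tau> \<in> \<Gamma>" "(\<tau> x = x' \<and> \<tau> y = y') \<or> (\<tau> x = y' \<and> \<tau> y = x')"
    using ecol_eq_imp_ex[OF assms(1)] by blast
  then show ?thesis
    using Etil_apply[of \<tau> x y] Etil_commute[of x' y'] assms(2) by auto
qed

lemma simplicial_apply:
  assumes T: "invariant_under \<Gamma> T" and \<sigma>: "\<sigma> \<in> \<Gamma>" and x: "simplicial adj T x"
  shows "simplicial adj T (\<sigma> x)"
  unfolding simplicial_def
proof (intro ballI impI)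
  fix a b assume ab: "a \<in> T" "b \<in> T" "adj (\<sigma> x) a" "adj (\<sigma> x) b" "a \<noteq> b"
  have "\<sigma> (inv \<sigma> c) \<in> T \<longleftrightarrow> inv \<sigma> c \<in> T" "adj (\<sigma> x) (\<sigma> (inv \<sigma> c)) \<longleftrightarrow> adj x (inv \<sigma> c)" for c
    using T \<sigma> adj_apply[OF \<sigma>] unfolding invariant_under_def by blast+
  then have "inv \<sigma> a \<in> T" "inv \<sigma> b \<in> T" "adj x (inv \<sigma> a)" "adj x (inv \<sigma> b)"
    using ab \<sigma> by auto
  moreover have "inv \<sigma> a \<noteq> inv \<sigma> b"
    using ab(5) apply_inv[OF \<sigma>] by metis
  ultimately have "adj (inv \<sigma> a) (inv \<sigma> b)"
    using x unfolding simplicial_def by blast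
  then show "adj a b"
    using adj_apply[OF \<sigma>, of "inv \<sigma> a" "inv \<sigma> b"] \<sigma> by simp
qed

definition midpoints :: "'a set list \<Rightarrow> 'a \<Rightarrow> 'a \<Rightarrow> 'a set set \<Rightarrow> 'a set set \<Rightarrow> 'a set" where
  "midpoints ord v w k h = {u \<in> Vle ord (min (pos ord v) (pos ord w)).
      Etil V adj v u \<and> Etil V adj u w \<and> ecol \<Gamma> v u = k \<and> ecol \<Gamma> u w = h}"

lemma mto_eq_card_midpoints: "mto V adj \<Gamma> ord v w k h = card (midpoints ord v w k h)"
  unfolding mto_def midpoints_def ..

lemma mto_commute: "mto V adj \<Gamma> ord v w k h = mto V adj \<Gamma> ord w v h k"
proof -
  have "midpoints ord v w k h = midpoints ord w v h k"
    unfolding midpoints_def by (auto simp: min.commute Etil_commute ecol_commute)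
  then show ?thesis
    unfolding mto_eq_card_midpoints by simp
qed

lemma apply_in_midpoints_iff:
  assumes classes: "\<forall>A\<in>set ord. invariant_under \<Gamma> A" and \<sigma>: "\<sigma> \<in> \<Gamma>"
  shows "\<sigma> u \<in> midpoints ord (\<sigma> v) (\<sigma> w) k h \<longleftrightarrow> u \<in> midpoints ord v w k h"
proof -
  have "\<sigma> u \<in> Vle ord i \<longleftrightarrow> u \<in> Vle ord i" for i
    using invariant_under_Vle[OF classes] \<sigma> unfolding invariant_under_def by blast
  then show ?thesis
    unfolding midpoints_def using pos_apply[OF classes \<sigma>] Etil_apply[OF \<sigma>] ecol_apply[OF \<sigma>]
    by simp
qed

lemma mto_apply:
  assumes classes: "\<forall>A\<in>set ord. invariant_under \<Gamma> A" and \<sigma>: "\<sigma> \<in> \<Gamma>"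
  shows "mto V adj \<Gamma> ord (\<sigma> v) (\<sigma> w) k h = mto V adj \<Gamma> ord v w k h"
proof -
  have "midpoints ord v w k h = \<sigma> -` midpoints ord (\<sigma> v) (\<sigma> w) k h"
    using apply_in_midpoints_iff[OF classes \<sigma>] by auto
  moreover have "inj \<sigma>" "surj \<sigma>"
    using permutes[OF \<sigma>] by (auto dest: permutes_inj permutes_surj)
  ultimately show ?thesis
    unfolding mto_eq_card_midpoints by (simp add: card_vimage_inj)
qed

lemma M1_if_invariant_classes:
  assumes classes: "\<forall>A\<in>set ord. invariant_under \<Gamma> A"
  shows "M1 V adj \<Gamma> ord"
  unfolding M1_def
proof (intro allI impI)
  fix v w v' w' k h
  assume "ecol \<Gamma> v w = ecol \<Gamma> v' w'"
  then obtain \<tau> where \<tau>: "\<tau> \<in> \<Gamma>" "(\<tau> v = v' \<and> \<tau> w = w') \<or> (\<tau> v = w' \<and> \<tau> w = v')"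
    using ecol_eq_imp_ex by blast
  from \<tau>(2) show "mboth V adj \<Gamma> ord v w k h = mboth V adj \<Gamma> ord v' w' k h"
  proof
    assume "\<tau> v = v' \<and> \<tau> w = w'"
    then show ?thesis
      using mto_apply[OF classes \<tau>(1), of v w] unfolding mboth_def by auto
  next
    assume "\<tau> v = w' \<and> \<tau> w = v'"
    then have "mboth V adj \<Gamma> ord v' w' k h = mto V adj \<Gamma> ord w v k h + mto V adj \<Gamma> ord w v h k"
      using mto_apply[OF classes \<tau>(1), of w v] unfolding mboth_def by auto
    then show ?thesis
      unfolding mboth_def using mto_commute[of ord w v] by simp
  qed
qed

lemma M2_if_generously_transitive:
  assumes classes: "\<forall>A\<in>set ord. invariant_under \<Gamma> A" and gt: "generously_transitive \<Gamma> V"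
  shows "M2 V adj \<Gamma> ord"
  unfolding M2_def
proof (intro allI impI ballI)
  fix v w k h assume vw: "Etil V adj v w" "vcol \<Gamma> v = vcol \<Gamma> w"
  show "mto V adj \<Gamma> ord v w k h = mto V adj \<Gamma> ord w v k h"
  proof (cases "v = w")
    case False
    have "vorbit \<Gamma> v \<in> vorbits \<Gamma> V" "w \<in> vorbit \<Gamma> v"
      using vw Etil_in_V vcol_eq_imp_vorbit unfolding vorbits_def by auto
    then obtain \<sigma> where "\<sigma> \<in> \<Gamma>" "\<sigma> v = w" "\<sigma> w = v"
      using gt False vorbit_self unfolding generously_transitive_def by blast
    then show ?thesis
      using mto_apply[OF classes, of \<sigma> v w k h] by simp
  qed simp
qed

lemma cpeo_peo_color_order:
  assumes peo: "peo V adj vs"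
  shows "cpeo adj (peo_color_order (vorbit \<Gamma>) vs (card (vorbits \<Gamma> V)))"
proof -
  define ord where "ord = peo_color_order (vorbit \<Gamma>) vs (card (vorbits \<Gamma> V))"
  have set_vs: "set vs = V"
    using peo unfolding peo_def by blast
  have ord: "distinct ord" "set ord \<subseteq> vorbits \<Gamma> V" and length_ord: "length ord = card (vorbits \<Gamma> V)"
    using peo_color_order_distinct_classes[where orb = "vorbit \<Gamma>" and vs = vs, OF vorbit_self vorbit_eq]
    unfolding ord_def vorbits_def set_vs by (auto simp: length_peo_color_order)
  have "simplicial adj (\<Union> (set (drop i ord))) v" if i: "i < length ord" and v: "v \<in> ord ! i" for i v
  proof -
    let ?P = "\<Union> (set (take i ord))" and ?T = "\<Union> (set (drop i ord))"
    have "i < card (vorbit \<Gamma> ` set vs)"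
      using i length_ord by (simp add: vorbits_def set_vs)
    then obtain us x ws where vs: "vs = us @ x # ws"
      and us: "set us \<subseteq> \<Union> (set (peo_color_order (vorbit \<Gamma>) vs i))"
      and x: "peo_color_order (vorbit \<Gamma>) vs (card (vorbit \<Gamma> ` set vs)) ! i = vorbit \<Gamma> x"
      using peo_color_order_nth_first_uncovered[where orb = "vorbit \<Gamma>", OF vorbit_self vorbit_eq] by blast
    have "take i ord = peo_color_order (vorbit \<Gamma>) vs i"
      using i length_ord unfolding ord_def by (simp add: take_peo_color_order)
    with us have "set us \<subseteq> ?P"
      by simp
    have "ord ! i = vorbit \<Gamma> x"
      using x by (simp add: ord_def vorbits_def set_vs)
    have "V - ?P \<subseteq> set (x # ws)"
      using vs(1) set_vs \<open>set us \<subseteq> ?P\<close> by auto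
    then have "?T \<subseteq> set (x # ws)"
      using Union_drop_vorbits_subset[OF ord, of i] by blast
    with peo_simplicial_append_Cons[OF peo[unfolded vs]] have "simplicial adj ?T x"
      by (rule simplicial_subset)
    moreover have "invariant_under \<Gamma> ?T"
      using ord(2) invariant_under_vorbit unfolding vorbits_def
      by (auto intro!: invariant_under_Union dest: in_set_dropD)
    moreover obtain \<sigma> where "\<sigma> \<in> \<Gamma>" "v = \<sigma> x"
      using v \<open>ord ! i = vorbit \<Gamma> x\<close> unfolding vorbit_def by blast
    ultimately show ?thesis
      using simplicial_apply by blast
  qed
  then show ?thesis
    unfolding cpeo_def ord_def by blast
qed

end

lemma cyclic_grp_commute:
  assumes "cyclic_grp \<Gamma>" and "\<sigma> \<in> \<Gamma>" and "\<tau> \<in> \<Gamma>"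
  shows "\<sigma> \<circ> \<tau> = \<tau> \<circ> \<sigma>"
proof -
  obtain g m n where "\<sigma> = g ^^ m" "\<tau> = g ^^ n"
    using assms unfolding cyclic_grp_def by blast
  then show ?thesis
    by (metis funpow_add add.commute)
qed

locale abelian_perm_group = perm_group +
  assumes commute: "\<sigma> \<in> \<Gamma> \<Longrightarrow> \<tau> \<in> \<Gamma> \<Longrightarrow> \<sigma> \<circ> \<tau> = \<tau> \<circ> \<sigma>"
begin

lemma commute_apply: "\<sigma> \<in> \<Gamma> \<Longrightarrow> \<tau> \<in> \<Gamma> \<Longrightarrow> \<sigma> (\<tau> x) = \<tau> (\<sigma> x)"
  using commute by (metis comp_apply)

definition orbit_reflection :: "'a \<Rightarrow> 'a \<Rightarrow> 'a \<Rightarrow> 'a" where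
  "orbit_reflection v w u = inv (SOME \<sigma>. \<sigma> \<in> \<Gamma> \<and> \<sigma> v = u) w"

lemma orbit_reflection_apply:
  assumes w: "w \<in> vorbit \<Gamma> v" and \<sigma>: "\<sigma> \<in> \<Gamma>"
  shows "orbit_reflection v w (\<sigma> v) = inv \<sigma> w"
proof -
  define s where "s = (SOME s. s \<in> \<Gamma> \<and> s v = \<sigma> v)"
  have s: "s \<in> \<Gamma>" "s v = \<sigma> v"
    unfolding s_def using someI[of "\<lambda>s. s \<in> \<Gamma> \<and> s v = \<sigma> v" \<sigma>] \<sigma> by blast+
  obtain \<mu> where \<mu>: "\<mu> \<in> \<Gamma>" "w = \<mu> v"
    using w unfolding vorbit_def by blast
  have "inv s v = inv s (inv \<sigma> (\<sigma> v))"
    using \<sigma> by simp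
  also have "\<dots> = inv \<sigma> (inv s (\<sigma> v))"
    using commute_apply[OF inv_in[OF s(1)] inv_in[OF \<sigma>]] .
  also have "\<dots> = inv \<sigma> v"
    using s by (metis inv_apply)
  finally have "inv s v = inv \<sigma> v" .
  have "inv s w = \<mu> (inv s v)"
    using commute_apply[OF inv_in[OF s(1)] \<mu>(1)] \<mu>(2) by simp
  also have "\<dots> = \<mu> (inv \<sigma> v)"
    using \<open>inv s v = inv \<sigma> v\<close> by simp
  also have "\<dots> = inv \<sigma> w"
    using commute_apply[OF \<mu>(1) inv_in[OF \<sigma>]] \<mu>(2) by simp
  finally show ?thesis
    unfolding orbit_reflection_def s_def .
qed

lemma orbit_reflection_in_vorbit:
  assumes "w \<in> vorbit \<Gamma> v" and "u \<in> vorbit \<Gamma> v"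
  shows "orbit_reflection v w u \<in> vorbit \<Gamma> v"
proof -
  obtain \<sigma> where "\<sigma> \<in> \<Gamma>" "u = \<sigma> v"
    using assms(2) unfolding vorbit_def by blast
  then show ?thesis
    using orbit_reflection_apply[OF assms(1)] apply_in_vorbit[OF inv_in assms(1)] by simp
qed

lemma orbit_reflection_involutive:
  assumes "w \<in> vorbit \<Gamma> v" and "u \<in> vorbit \<Gamma> v"
  shows "orbit_reflection w v (orbit_reflection v w u) = u"
proof -
  obtain \<sigma> where \<sigma>: "\<sigma> \<in> \<Gamma>" "u = \<sigma> v"
    using assms(2) unfolding vorbit_def by blast
  have "orbit_reflection w v (orbit_reflection v w u) = orbit_reflection w v (inv \<sigma> w)"
    using orbit_reflection_apply[OF assms(1) \<sigma>(1)] \<sigma>(2) by simp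
  also have "\<dots> = inv (inv \<sigma>) v"
    using orbit_reflection_apply[OF vorbit_sym[OF assms(1)] inv_in[OF \<sigma>(1)]] .
  also have "\<dots> = u"
    using permutes_inv_inv[OF permutes[OF \<sigma>(1)]] \<sigma>(2) by simp
  finally show ?thesis .
qed

lemma ecol_orbit_reflection:
  assumes "w \<in> vorbit \<Gamma> v" and "u \<in> vorbit \<Gamma> v"
  shows "ecol \<Gamma> w (orbit_reflection v w u) = ecol \<Gamma> v u"
    and "ecol \<Gamma> (orbit_reflection v w u) v = ecol \<Gamma> u w"
proof -
  obtain \<sigma> where \<sigma>: "\<sigma> \<in> \<Gamma>" "u = \<sigma> v"
    using assms(2) unfolding vorbit_def by blast
  obtain \<mu> where \<mu>: "\<mu> \<in> \<Gamma>" "w = \<mu> v"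
    using assms(1) unfolding vorbit_def by blast
  have reflection: "orbit_reflection v w u = \<mu> (inv \<sigma> v)"
    using orbit_reflection_apply[OF assms(1) \<sigma>(1)] commute_apply[OF inv_in[OF \<sigma>(1)] \<mu>(1)] \<sigma>(2) \<mu>(2)
    by simp
  have "ecol \<Gamma> w (orbit_reflection v w u) = ecol \<Gamma> v (inv \<sigma> v)"
    using ecol_apply[OF \<mu>(1), of v "inv \<sigma> v"] reflection \<mu>(2) by simp
  also have "\<dots> = ecol \<Gamma> u v"
    using ecol_apply[OF \<sigma>(1), of v "inv \<sigma> v"] \<sigma> by simp
  finally show "ecol \<Gamma> w (orbit_reflection v w u) = ecol \<Gamma> v u"
    by (simp add: ecol_commute)
  have "ecol \<Gamma> (orbit_reflection v w u) v = ecol \<Gamma> (inv \<sigma> w) v"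
    using orbit_reflection_apply[OF assms(1) \<sigma>(1)] \<sigma>(2) by simp
  also have "\<dots> = ecol \<Gamma> w u"
    using ecol_apply[OF \<sigma>(1), of "inv \<sigma> w" v] \<sigma> by simp
  finally show "ecol \<Gamma> (orbit_reflection v w u) v = ecol \<Gamma> u w"
    by (simp add: ecol_commute)
qed

end

locale abelian_aut_group = aut_group + abelian_perm_group V \<Gamma>
begin

lemma orbit_reflection_in_midpoints:
  assumes classes: "\<forall>A\<in>set ord. invariant_under \<Gamma> A"
    and w: "w \<in> vorbit \<Gamma> v" and k: "k \<in> Fcols V adj \<Gamma>" and u: "u \<in> midpoints ord v w k h"
  shows "orbit_reflection v w u \<in> midpoints ord w v k h"
proof -
  let ?\<rho> = "orbit_reflection v w u"
  have u_props: "u \<in> Vle ord (min (pos ord w) (pos ord v))" "Etil V adj v u" "Etil V adj u w"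
    "ecol \<Gamma> v u = k" "ecol \<Gamma> u w = h"
    using u unfolding midpoints_def by (auto simp: min.commute)
  then have "u \<in> vorbit \<Gamma> v"
    using k Fcols_imp_vorbit by blast
  then have "?\<rho> \<in> vorbit \<Gamma> u"
    using orbit_reflection_in_vorbit[OF w] vorbit_eq by simp
  then have "?\<rho> \<in> Vle ord (min (pos ord w) (pos ord v))"
    using u_props(1) invariant_under_iff_vorbit[OF invariant_under_Vle[OF classes]] by blast
  moreover have "ecol \<Gamma> w ?\<rho> = k" "ecol \<Gamma> ?\<rho> v = h"
    using ecol_orbit_reflection[OF w \<open>u \<in> vorbit \<Gamma> v\<close>] u_props by simp_all
  moreover have "Etil V adj w ?\<rho>" "Etil V adj ?\<rho> v"
    using ecol_eq_imp_Etil calculation(2,3) u_props by metis+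
  ultimately show ?thesis
    unfolding midpoints_def by blast
qed

lemma mto_commute_if_same_orbit:
  assumes classes: "\<forall>A\<in>set ord. invariant_under \<Gamma> A"
    and w: "w \<in> vorbit \<Gamma> v" and k: "k \<in> Fcols V adj \<Gamma>"
  shows "mto V adj \<Gamma> ord v w k h = mto V adj \<Gamma> ord w v k h"
proof -
  have v: "v \<in> vorbit \<Gamma> w"
    using w by (rule vorbit_sym)
  have in_orbit: "u \<in> vorbit \<Gamma> x" if "u \<in> midpoints ord x y k h" for u x y
    using that k Fcols_imp_vorbit unfolding midpoints_def by blast
  have "bij_betw (orbit_reflection v w) (midpoints ord v w k h) (midpoints ord w v k h)"
  proof (rule bij_betw_byWitness[where f' = "orbit_reflection w v"])
    show "\<forall>u\<in>midpoints ord v w k h. orbit_reflection w v (orbit_reflection v w u) = u"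
      using orbit_reflection_involutive[OF w] in_orbit by blast
    show "\<forall>u\<in>midpoints ord w v k h. orbit_reflection v w (orbit_reflection w v u) = u"
      using orbit_reflection_involutive[OF v] in_orbit by blast
    show "orbit_reflection v w ` midpoints ord v w k h \<subseteq> midpoints ord w v k h"
      using orbit_reflection_in_midpoints[OF classes w k] by blast
    show "orbit_reflection w v ` midpoints ord w v k h \<subseteq> midpoints ord v w k h"
      using orbit_reflection_in_midpoints[OF classes v k] by blast
  qed
  then show ?thesis
    unfolding mto_eq_card_midpoints by (rule bij_betw_same_card)
qed

lemma M2_if_commute:
  assumes classes: "\<forall>A\<in>set ord. invariant_under \<Gamma> A"
  shows "M2 V adj \<Gamma> ord"
  unfolding M2_def
  using mto_commute_if_same_orbit[OF classes] vcol_eq_imp_vorbit by blast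

end

theorem lemma3p11:
  fixes V :: "'a set" and adj :: "'a \<Rightarrow> 'a \<Rightarrow> bool" and \<Gamma> :: "('a \<Rightarrow> 'a) set"
  assumes G: "simple_graph V adj"
    and sub: "subgroup_Aut \<Gamma> V adj"
  shows "(\<forall>ord. color_order \<Gamma> V ord \<longrightarrow> M1 V adj \<Gamma> ord)
    \<and> (\<forall>vs. peo V adj vs \<longrightarrow>
          cpeo adj (peo_color_order (vorbit \<Gamma>) vs (card (vorbits \<Gamma> V))))
    \<and> (decomposable V adj \<longrightarrow>
          (\<forall>ord. color_order \<Gamma> V ord \<and> cpeo adj ord \<longrightarrow> CER V adj \<Gamma> ord))
    \<and> (decomposable V adj \<and> (generously_transitive \<Gamma> V \<or> cyclic_grp \<Gamma>) \<longrightarrow>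
          (\<forall>ord. color_order \<Gamma> V ord \<and> cpeo adj ord \<longrightarrow> symCER V adj \<Gamma> ord))"
proof -
  interpret aut_group V \<Gamma> adj
    using G sub by (rule aut_groupI)
  have M1: "M1 V adj \<Gamma> ord" if "color_order \<Gamma> V ord" for ord
    using M1_if_invariant_classes color_order_invariant[OF that] .
  have M2: "M2 V adj \<Gamma> ord"
    if "color_order \<Gamma> V ord" and "generously_transitive \<Gamma> V \<or> cyclic_grp \<Gamma>" for ord
    using that(2)
  proof
    assume "generously_transitive \<Gamma> V"
    then show ?thesis
      using M2_if_generously_transitive color_order_invariant[OF that(1)] by blast
  next
    assume "cyclic_grp \<Gamma>"
    then interpret abelian_aut_group V \<Gamma> adj
      by unfold_locales (rule cyclic_grp_commute)
    show ?thesis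
      using M2_if_commute color_order_invariant[OF that(1)] by blast
  qed
  \<comment> \<open>Decomposability only guarantees that a cpeo exists; (iii) and (iv) assume one is given.\<close>
  show ?thesis
    unfolding CER_def symCER_def using M1 M2 cpeo_peo_color_order by blast
qed

end
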